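(* Let $k\ge 1$. Let $\mathcal M^\circ_{2k+1,0}$ (resp. $\mathcal M^\circ_{2k+1,1}$) be the set of elements of $\mathcal M^\circ_{2k+1}$ whose central square $k+1$ is land (resp. water). Then $\mathrm{red}\circ\mathrm{contr}$ restricts to bijections $\mathcal M^\circ_{2k+1,0}\to\mathcal N_k$ and $\mathcal M^\circ_{2k+1,1}\to\mathcal N_{k,1}\cup\{R_{\mathrm{land}}\}$. Consequently $M^\circ_{2k+1} = N_k+N_{k,1}+1 = N_k + N_{k+1,2}$.
   Context: Colorings. Each square is colored water or land. Two distinct squares are adjacent if they share an edge after all edge identifications; a set of squares is connected if its induced adjacency graph is connected (empty set counts as connected). (N1): the water is connected. (N2$\circ$): no interior (non-boundary) vertex of the tiling has all of the squares incident to it water. A $2\times k$ Nurikabe rectangle is a coloring of the $2\times k$ grid (columns $1,\dots,k$ left to right, no identifications) with connected water and no $2\times 2$ block of water squares; $\mathcal N_k$ is the set of these, $N_k=|\mathcal N_k|$; $\mathcal N_{k,i}$ is the subset with exactly $i$ water squares in column $k$, $N_{k,i}=|\mathcal N_{k,i}|$. $R_{\mathrm{land}}\in\mathcal N_k$ is the all-land rectangle. Tile $[0,n]\times[0,1]$ by unit squares $[j-1,j]\times[0,1]$, called square $j$. The $1\times n$ Möbius strip identifies $(x,1)\sim(n-x,0)$ for $x\in[0,n]$; its boundary is the image of the vertical sides. $\mathcal M^\circ_n$ is the set of colorings of the $1\times n$ Möbius strip satisfying (N1) and (N2$\circ$), $M^\circ_n=|\mathcal M^\circ_n|$. Contraction: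 for a coloring of the $1\times(2k+1)$ Möbius strip, $\mathrm{contr}$ gives the coloring of the $1\times 2k$ Möbius strip obtained by deleting square $k+1$, with square $j\le k$ keeping position $j$ and square $j\ge k+2$ moving to position $j-1$. Rectangular reduction: for a coloring of the $1\times 2k$ Möbius strip, $\mathrm{red}$ gives the coloring of the $2\times k$ grid whose column $j$ has top square colored as square $j$ and bottom square colored as square $2k+1-j$. *)

theory Defs
  imports Main
begin

text \<open>A coloring is represented by its set of water squares (all other squares are land).\<close>

definition connected_in :: "('a \<Rightarrow> 'a \<Rightarrow> bool) \<Rightarrow> 'a set \<Rightarrow> bool" where
  "connected_in adj S \<longleftrightarrow>
     (\<forall>x\<in>S. \<forall>y\<in>S. (\<lambda>a b. a \<in> S \<and> b \<in> S \<and> adj a b)\<^sup>*\<^sup>* x y)"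

text \<open>Squares are 1..n; square j = [j-1,j] x [0,1]. The identification (x,1) ~ (n-x,0)
  glues the top edge of square j to the bottom edge of square n+1-j; the vertical sides
  are not identified.  Two distinct squares are adjacent iff they share a vertical edge
  (|i-j| = 1) or a glued horizontal edge (i + j = n + 1).\<close>
definition mob_adj :: "nat \<Rightarrow> nat \<Rightarrow> nat \<Rightarrow> bool" where
  "mob_adj n i j \<longleftrightarrow> i \<in> {1..n} \<and> j \<in> {1..n} \<and> i \<noteq> j \<and>
     (i + 1 = j \<or> j + 1 = i \<or> i + j = n + 1)"

text \<open>Squares incident to the point with x-coordinate x on a horizontal side of the strip.\<close>
definition mob_sq_at :: "nat \<Rightarrow> nat \<Rightarrow> nat set" where
  "mob_sq_at n x = {j \<in> {1..n}. j - 1 \<le> x \<and> x \<le> j}"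

text \<open>Vertices of the tiling: the class of (i,1) ~ (n-i,0), for i in 0..n.  It lies on the
  boundary (image of the vertical sides) iff i = 0 or i = n; so interior vertices are
  i = 1..n-1.  The squares incident to it are those incident to (i,1) or to (n-i,0).\<close>
definition mob_vertex_squares :: "nat \<Rightarrow> nat \<Rightarrow> nat set" where
  "mob_vertex_squares n i = mob_sq_at n i \<union> mob_sq_at n (n - i)"

definition M_circ :: "nat \<Rightarrow> nat set set" where
  "M_circ n = {W. W \<subseteq> {1..n} \<and> connected_in (mob_adj n) W \<and>
      (\<forall>i\<in>{1..n-1}. \<not> mob_vertex_squares n i \<subseteq> W)}"

text \<open>Cells (r,c) with row r in {1,2} (1 = top, 2 = bottom) and column c in 1..k.\<close>
definition grid :: "nat \<Rightarrow> (nat \<times> nat) set" where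
  "grid k = {1,2} \<times> {1..k}"

definition grid_adj :: "nat \<Rightarrow> nat \<times> nat \<Rightarrow> nat \<times> nat \<Rightarrow> bool" where
  "grid_adj k p q \<longleftrightarrow> p \<in> grid k \<and> q \<in> grid k \<and>
     ((fst p = fst q \<and> (snd p + 1 = snd q \<or> snd q + 1 = snd p)) \<or>
      (snd p = snd q \<and> fst p \<noteq> fst q))"

definition N_set :: "nat \<Rightarrow> (nat \<times> nat) set set" where
  "N_set k = {W. W \<subseteq> grid k \<and> connected_in (grid_adj k) W \<and>
      (\<forall>c\<in>{1..<k}. \<not> {(1,c),(2,c),(1,c+1),(2,c+1)} \<subseteq> W)}"

definition N_set_i :: "nat \<Rightarrow> nat \<Rightarrow> (nat \<times> nat) set set" where
  "N_set_i k i = {W \<in> N_set k. card {r \<in> {1,2}. (r, k) \<in> W} = i}"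

definition R_land :: "(nat \<times> nat) set" where
  "R_land = {}"

definition contr :: "nat \<Rightarrow> nat set \<Rightarrow> nat set" where
  "contr k W = {j \<in> W. j \<le> k} \<union> {j - 1 | j. j \<in> W \<and> k + 2 \<le> j}"

definition red :: "nat \<Rightarrow> nat set \<Rightarrow> (nat \<times> nat) set" where
  "red k W = {(1, j) | j. j \<in> {1..k} \<and> j \<in> W} \<union>
             {(2, j) | j. j \<in> {1..k} \<and> 2 * k + 1 - j \<in> W}"

end

theory Submission
  imports Defs
begin

(* Deleting the central square k+1 and folding the 1 x (2k+1) Moebius strip at it identifies
   the remaining squares with the cells of the 2 x k grid: square j <= k becomes the top cell of
   column j and square 2k+2-j the bottom cell.  The gluing of the strip becomes the vertical
   adjacency of the grid, so connectivity is preserved, and the four squares around the interior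
   vertex i (which is also the vertex 2k+1-i) become the 2 x 2 block in columns i, i+1 -- except
   around vertex k, whose squares are k, k+1, k+2.  Hence colorings with a land centre are exactly
   the Nurikabe rectangles.  A water centre touches only the squares k and k+2, which cannot both
   be water, so it is a pendant square: deleting it leaves the empty coloring or a connected one
   with exactly one water square in column k.  The same pendant argument shows that deleting a
   full water last column maps N_{k+1,2} bijectively onto N_{k,1} plus the all-land rectangle. *)

section \<open>Connected sets\<close>

lemma rtranclp_map:
  assumes "R\<^sup>*\<^sup>* x y" and "\<And>u v. R u v \<Longrightarrow> Q\<^sup>*\<^sup>* (f u) (f v)"
  shows "Q\<^sup>*\<^sup>* (f x) (f y)"
  using assms(1) by (induction rule: rtranclp_induct) (auto dest: assms(2) intro: rtranclp_trans)

lemma connected_in_singleton [simp]: "connected_in R {x}"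
  by (simp add: connected_in_def)

lemma connected_in_cong:
  assumes "\<And>x y. x \<in> S \<Longrightarrow> y \<in> S \<Longrightarrow> R x y \<longleftrightarrow> Q x y"
  shows "connected_in R S \<longleftrightarrow> connected_in Q S"
proof -
  have "(\<lambda>x y. x \<in> S \<and> y \<in> S \<and> R x y) = (\<lambda>x y. x \<in> S \<and> y \<in> S \<and> Q x y)"
    using assms by blast
  then show ?thesis
    unfolding connected_in_def by simp
qed

lemma connected_in_image:
  assumes "connected_in R S"
    and "\<And>x y. x \<in> S \<Longrightarrow> y \<in> S \<Longrightarrow> R x y \<Longrightarrow> Q (f x) (f y)"
  shows "connected_in Q (f ` S)"
  unfolding connected_in_def
proof (intro ballI)
  fix a b assume "a \<in> f ` S" "b \<in> f ` S"
  then obtain x y where xy: "x \<in> S" "y \<in> S" "a = f x" "b = f y"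
    by blast
  have "(\<lambda>u v. u \<in> S \<and> v \<in> S \<and> R u v)\<^sup>*\<^sup>* x y"
    using assms(1) xy unfolding connected_in_def by blast
  then show "(\<lambda>u v. u \<in> f ` S \<and> v \<in> f ` S \<and> Q u v)\<^sup>*\<^sup>* a b"
    unfolding xy(3,4) by (rule rtranclp_map) (use assms(2) in blast)
qed

lemma connected_in_Un:
  assumes "connected_in R A" "connected_in R B" "a \<in> A" "b \<in> B" "R a b" "R b a"
  shows "connected_in R (A \<union> B)"
  unfolding connected_in_def
proof (intro ballI)
  let ?U = "\<lambda>u v. u \<in> A \<union> B \<and> v \<in> A \<union> B \<and> R u v"
  have within: "?U\<^sup>*\<^sup>* x y" if "connected_in R C" "C \<subseteq> A \<union> B" "x \<in> C" "y \<in> C" for C x y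
  proof -
    have "(\<lambda>u v. u \<in> C \<and> v \<in> C \<and> R u v)\<^sup>*\<^sup>* x y"
      using that unfolding connected_in_def by blast
    then show ?thesis
      by (rule rtranclp_mono[THEN predicate2D, rotated]) (use that(2) in auto)
  qed
  note in_A = within[OF assms(1)] and in_B = within[OF assms(2)]
  have bridge: "?U\<^sup>*\<^sup>* a b" "?U\<^sup>*\<^sup>* b a"
    using assms(3-6) by auto
  have to_a: "?U\<^sup>*\<^sup>* x a" and from_a: "?U\<^sup>*\<^sup>* a x" if "x \<in> A \<union> B" for x
    using that in_A[of x a] in_A[of a x] in_B[of x b] in_B[of b x] bridge assms(3,4)
    by (auto intro: rtranclp_trans)
  fix x y assume "x \<in> A \<union> B" "y \<in> A \<union> B"
  then show "?U\<^sup>*\<^sup>* x y"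
    using to_a from_a by (blast intro: rtranclp_trans)
qed

lemma connected_in_exit_edge:
  assumes "connected_in R S" "x \<in> S \<inter> B" "y \<in> S - B"
  obtains u v where "u \<in> S \<inter> B" "v \<in> S - B" "R u v"
proof -
  have "(\<lambda>u v. u \<in> S \<and> v \<in> S \<and> R u v)\<^sup>*\<^sup>* x y"
    using assms unfolding connected_in_def by blast
  then have "\<exists>u v. u \<in> S \<inter> B \<and> v \<in> S - B \<and> R u v"
    using assms(2,3)
  proof (induction rule: rtranclp_induct)
    case (step y z)
    then show ?case by (cases "y \<in> B") auto
  qed simp
  then show ?thesis
    using that by blast
qed

text \<open>Retracting \<open>B - A\<close> onto \<open>a\<close> turns every path in \<open>A \<union> B\<close> into a path in \<open>A\<close>.\<close>
lemma connected_in_single_contact: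
  assumes "connected_in R (A \<union> B)" "a \<in> A"
    and "\<And>x y. x \<in> A \<Longrightarrow> y \<in> B - A \<Longrightarrow> R x y \<or> R y x \<Longrightarrow> x = a"
  shows "connected_in R A"
  unfolding connected_in_def
proof (intro ballI)
  fix x y assume xy: "x \<in> A" "y \<in> A"
  define p where "p z = (if z \<in> A then z else a)" for z
  have "(\<lambda>u v. u \<in> A \<union> B \<and> v \<in> A \<union> B \<and> R u v)\<^sup>*\<^sup>* x y"
    using assms(1) xy unfolding connected_in_def by blast
  then have "(\<lambda>u v. u \<in> A \<and> v \<in> A \<and> R u v)\<^sup>*\<^sup>* (p x) (p y)"
  proof (rule rtranclp_map)
    fix u v assume uv: "u \<in> A \<union> B \<and> v \<in> A \<union> B \<and> R u v"
    show "(\<lambda>u v. u \<in> A \<and> v \<in> A \<and> R u v)\<^sup>*\<^sup>* (p u) (p v)"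
    proof (cases "u \<in> A \<and> v \<in> A")
      case True
      then show ?thesis
        using uv by (auto simp: p_def)
    next
      case False
      then have "p u = p v"
        using uv assms(3)[of u v] assms(3)[of v u] by (auto simp: p_def)
      then show ?thesis by simp
    qed
  qed
  then show "(\<lambda>u v. u \<in> A \<and> v \<in> A \<and> R u v)\<^sup>*\<^sup>* x y"
    using xy by (simp add: p_def)
qed

lemma connected_in_Un_pendant_iff:
  assumes "connected_in R B" "B \<noteq> {}" "A \<inter> B = {}"
    and contact: "\<And>x y. x \<in> A \<Longrightarrow> y \<in> B \<Longrightarrow> R x y \<or> R y x \<Longrightarrow> x = a"
    and attach: "a \<in> A \<Longrightarrow> \<exists>b\<in>B. R a b \<and> R b a"
  shows "connected_in R (A \<union> B) \<longleftrightarrow> A = {} \<or> (a \<in> A \<and> connected_in R A)"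
proof
  assume conn: "connected_in R (A \<union> B)"
  show "A = {} \<or> (a \<in> A \<and> connected_in R A)"
  proof (cases "A = {}")
    case False
    then obtain x where "x \<in> (A \<union> B) \<inter> A" by blast
    moreover obtain y where "y \<in> (A \<union> B) - A" using assms(2,3) by blast
    ultimately obtain u v where "u \<in> A" "v \<in> B" "R u v"
      by (rule connected_in_exit_edge[OF conn]) blast
    then have "a \<in> A"
      using contact[of u v] by simp
    moreover have "connected_in R A"
    proof (rule connected_in_single_contact[OF conn \<open>a \<in> A\<close>])
      fix x y assume "x \<in> A" "y \<in> B - A" "R x y \<or> R y x"
      then show "x = a" using contact[of x y] by blast
    qed
    ultimately show ?thesis by blast
  qed simp
next
  assume "A = {} \<or> (a \<in> A \<and> connected_in R A)"
  then show "connected_in R (A \<union> B)"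
  proof
    assume "a \<in> A \<and> connected_in R A"
    with attach obtain b where "b \<in> B" "R a b" "R b a" by blast
    with \<open>a \<in> A \<and> connected_in R A\<close> show ?thesis
      using connected_in_Un[OF _ assms(1)] by blast
  qed (use assms(1) in simp)
qed

section \<open>Folding the strip onto the grid\<close>

definition strip_to_grid :: "nat \<Rightarrow> nat \<Rightarrow> nat \<times> nat" where
  "strip_to_grid k j = (if j \<le> k then (1, j) else (2, 2 * k + 2 - j))"

definition grid_to_strip :: "nat \<Rightarrow> nat \<times> nat \<Rightarrow> nat" where
  "grid_to_strip k p = (if fst p = 1 then snd p else 2 * k + 2 - snd p)"

lemma strip_to_grid_in_grid: "j \<in> {1..2*k+1} - {k+1} \<Longrightarrow> strip_to_grid k j \<in> grid k"
  by (auto simp: strip_to_grid_def grid_def)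

lemma grid_to_strip_in_strip: "p \<in> grid k \<Longrightarrow> grid_to_strip k p \<in> {1..2*k+1} - {k+1}"
  by (auto simp: grid_to_strip_def grid_def)

lemma grid_to_strip_strip_to_grid [simp]:
  "j \<in> {1..2*k+1} - {k+1} \<Longrightarrow> grid_to_strip k (strip_to_grid k j) = j"
  by (auto simp: strip_to_grid_def grid_to_strip_def)

lemma strip_to_grid_grid_to_strip [simp]: "p \<in> grid k \<Longrightarrow> strip_to_grid k (grid_to_strip k p) = p"
  by (auto simp: strip_to_grid_def grid_to_strip_def grid_def)

lemma grid_to_strip_image_strip_to_grid:
  assumes "W \<subseteq> {1..2*k+1} - {k+1}"
  shows "grid_to_strip k ` strip_to_grid k ` W = W"
proof -
  have "grid_to_strip k (strip_to_grid k j) = j" if "j \<in> W" for j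
    using that assms by (intro grid_to_strip_strip_to_grid) blast
  then show ?thesis
    by (simp add: image_image)
qed

lemma strip_to_grid_image_grid_to_strip:
  assumes "V \<subseteq> grid k"
  shows "strip_to_grid k ` grid_to_strip k ` V = V"
proof -
  have "strip_to_grid k (grid_to_strip k p) = p" if "p \<in> V" for p
    using that assms by (intro strip_to_grid_grid_to_strip) blast
  then show ?thesis
    by (simp add: image_image)
qed

lemma mem_strip_to_grid_image:
  assumes "W \<subseteq> {1..2*k+1} - {k+1}"
  shows "p \<in> strip_to_grid k ` W \<longleftrightarrow> p \<in> grid k \<and> grid_to_strip k p \<in> W"
proof
  assume "p \<in> strip_to_grid k ` W"
  then obtain j where "j \<in> W" "p = strip_to_grid k j" by blast
  moreover from \<open>j \<in> W\<close> have "j \<in> {1..2*k+1} - {k+1}" using assms by blast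
  ultimately show "p \<in> grid k \<and> grid_to_strip k p \<in> W"
    by (simp add: strip_to_grid_in_grid del: atLeastAtMost_iff Diff_iff)
next
  assume "p \<in> grid k \<and> grid_to_strip k p \<in> W"
  then show "p \<in> strip_to_grid k ` W"
    by (metis image_eqI strip_to_grid_grid_to_strip)
qed

lemma red_contr_eq_image:
  assumes "W \<subseteq> {1..2*k+1}"
  shows "red k (contr k W) = strip_to_grid k ` (W - {k+1})"
proof (rule set_eqI)
  fix p :: "nat \<times> nat"
  obtain r c where p: "p = (r, c)" by force
  have image_side: "p \<in> strip_to_grid k ` (W - {k+1}) \<longleftrightarrow> p \<in> grid k \<and> grid_to_strip k p \<in> W - {k+1}"
    by (rule mem_strip_to_grid_image) (use assms in blast)
  have red_side: "p \<in> red k (contr k W) \<longleftrightarrow>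
      c \<in> {1..k} \<and> (r = 1 \<and> c \<in> contr k W \<or> r = 2 \<and> 2*k+1-c \<in> contr k W)"
    unfolding p red_def by auto
  have top: "c \<in> contr k W \<longleftrightarrow> c \<in> W" if "c \<in> {1..k}"
    using that unfolding contr_def by auto
  have bottom: "2*k+1-c \<in> contr k W \<longleftrightarrow> 2*k+2-c \<in> W" if "c \<in> {1..k}"
  proof -
    have "2*k+1-c \<in> contr k W \<longleftrightarrow> (\<exists>j. 2*k+1-c = j - 1 \<and> j \<in> W \<and> k + 2 \<le> j)"
      using that unfolding contr_def by auto
    also have "\<dots> \<longleftrightarrow> 2*k+2-c \<in> W"
    proof
      assume "\<exists>j. 2*k+1-c = j - 1 \<and> j \<in> W \<and> k + 2 \<le> j"
      then obtain j where "2*k+1-c = j - 1" "j \<in> W" "k + 2 \<le> j" by blast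
      moreover from this have "j = 2*k+2-c" using that by auto
      ultimately show "2*k+2-c \<in> W" by simp
    next
      assume "2*k+2-c \<in> W"
      then show "\<exists>j. 2*k+1-c = j - 1 \<and> j \<in> W \<and> k + 2 \<le> j"
        using that by (intro exI[of _ "2*k+2-c"]) auto
    qed
    finally show ?thesis .
  qed
  show "p \<in> red k (contr k W) \<longleftrightarrow> p \<in> strip_to_grid k ` (W - {k+1})"
    unfolding image_side red_side using top bottom
    by (auto simp: p grid_def grid_to_strip_def)
qed

lemma red_contr_punctured:
  assumes "W \<subseteq> {1..2*k+1} - {k+1}"
  shows "red k (contr k W) = strip_to_grid k ` W"
    and "red k (contr k (insert (k+1) W)) = strip_to_grid k ` W"
proof -
  have "W - {k+1} = W" "insert (k+1) W - {k+1} = W"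
    using assms by auto
  moreover have "W \<subseteq> {1..2*k+1}" "insert (k+1) W \<subseteq> {1..2*k+1}"
    using assms by auto
  ultimately show "red k (contr k W) = strip_to_grid k ` W"
    and "red k (contr k (insert (k+1) W)) = strip_to_grid k ` W"
    using red_contr_eq_image by metis+
qed

lemma grid_to_strip_image_punctured:
  "V \<subseteq> grid k \<Longrightarrow> grid_to_strip k ` V \<subseteq> {1..2*k+1} - {k+1}"
  by (rule image_subsetI) (use grid_to_strip_in_strip in blast)

lemma mob_adj_iff_grid_adj:
  assumes "i \<in> {1..2*k+1} - {k+1}" "j \<in> {1..2*k+1} - {k+1}"
  shows "mob_adj (2*k+1) i j \<longleftrightarrow> grid_adj k (strip_to_grid k i) (strip_to_grid k j)"
  using assms strip_to_grid_in_grid[OF assms(1)] strip_to_grid_in_grid[OF assms(2)]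
  unfolding mob_adj_def grid_adj_def strip_to_grid_def by auto

lemma connected_in_strip_to_grid_iff:
  assumes "W \<subseteq> {1..2*k+1} - {k+1}"
  shows "connected_in (mob_adj (2*k+1)) W \<longleftrightarrow> connected_in (grid_adj k) (strip_to_grid k ` W)"
proof
  assume "connected_in (mob_adj (2*k+1)) W"
  then show "connected_in (grid_adj k) (strip_to_grid k ` W)"
    by (rule connected_in_image) (use assms mob_adj_iff_grid_adj in blast)
next
  assume "connected_in (grid_adj k) (strip_to_grid k ` W)"
  then have "connected_in (mob_adj (2*k+1)) (grid_to_strip k ` strip_to_grid k ` W)"
  proof (rule connected_in_image)
    fix p q assume "p \<in> strip_to_grid k ` W" "q \<in> strip_to_grid k ` W" "grid_adj k p q"
    then obtain i j where ij: "i \<in> W" "j \<in> W" "p = strip_to_grid k i" "q = strip_to_grid k j"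
      by blast
    then have "i \<in> {1..2*k+1} - {k+1}" "j \<in> {1..2*k+1} - {k+1}"
      using assms by blast+
    with ij \<open>grid_adj k p q\<close> show "mob_adj (2*k+1) (grid_to_strip k p) (grid_to_strip k q)"
      using mob_adj_iff_grid_adj by simp
  qed
  then show "connected_in (mob_adj (2*k+1)) W"
    using grid_to_strip_image_strip_to_grid[OF assms] by simp
qed

lemma mob_vertex_squares_interior:
  assumes "1 \<le> i" "i \<le> n - 1"
  shows "mob_vertex_squares n i = {i, i+1, n-i, n+1-i}"
proof -
  have "mob_sq_at n x = {x, x+1}" if "1 \<le> x" "x \<le> n - 1" for x
    using that unfolding mob_sq_at_def by auto
  then show ?thesis
    using assms unfolding mob_vertex_squares_def by (auto simp: Suc_diff_le)
qed

definition no_water_block :: "nat \<Rightarrow> (nat \<times> nat) set \<Rightarrow> bool" where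
  "no_water_block k V \<longleftrightarrow> (\<forall>c\<in>{1..<k}. \<not> {(1,c),(2,c),(1,c+1),(2,c+1)} \<subseteq> V)"

lemma N_set_eq: "N_set k = {V. V \<subseteq> grid k \<and> connected_in (grid_adj k) V \<and> no_water_block k V}"
  unfolding N_set_def no_water_block_def ..

lemma ball_mirror_half_iff:
  fixes k :: nat
  assumes "\<And>i. i \<in> {1..2*k} \<Longrightarrow> P (2*k+1-i) \<longleftrightarrow> P i"
  shows "(\<forall>i\<in>{1..2*k}. P i) \<longleftrightarrow> (\<forall>i\<in>{1..k}. P i)"
proof
  assume lower: "\<forall>i\<in>{1..k}. P i"
  show "\<forall>i\<in>{1..2*k}. P i"
  proof
    fix i assume i: "i \<in> {1..2*k}"
    show "P i"
    proof (cases "i \<le> k")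
      case False
      then have "2*k+1-i \<in> {1..k}"
        using i by auto
      then show ?thesis
        using lower assms[OF i] by blast
    qed (use i lower in auto)
  qed
qed auto

lemma mob_vertex_condition_iff:
  assumes "k \<ge> 1" "W \<subseteq> {1..2*k+1}"
  shows "(\<forall>i\<in>{1..2*k+1-1}. \<not> mob_vertex_squares (2*k+1) i \<subseteq> W) \<longleftrightarrow>
    no_water_block k (strip_to_grid k ` (W - {k+1})) \<and> \<not> {k, k+1, k+2} \<subseteq> W"
proof -
  define P where "P i \<longleftrightarrow> {i, i+1, 2*k+1-i, 2*k+2-i} \<subseteq> W" for i
  have vertex: "mob_vertex_squares (2*k+1) i \<subseteq> W \<longleftrightarrow> P i" if "i \<in> {1..2*k}" for i
    using that mob_vertex_squares_interior[of i "2*k+1"] unfolding P_def by auto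
  have mirror: "P (2*k+1-i) \<longleftrightarrow> P i" if "i \<in> {1..2*k}" for i
  proof -
    have "2*k+1-(2*k+1-i) = i" "2*k+1-i+1 = 2*k+2-i" "2*k+2-(2*k+1-i) = i+1"
      using that by auto
    then show ?thesis
      unfolding P_def by auto
  qed
  have block: "{(1,c),(2,c),(1,c+1),(2,c+1)} \<subseteq> strip_to_grid k ` (W - {k+1}) \<longleftrightarrow> P c"
    if "c \<in> {1..<k}" for c
  proof -
    have "W - {k+1} \<subseteq> {1..2*k+1} - {k+1}"
      using assms(2) by blast
    note mem_image = mem_strip_to_grid_image[OF this]
    have "2*k+2-(c+1) = 2*k+1-c"
      by simp
    then show ?thesis
      using that unfolding P_def insert_subset mem_image
      by (auto simp: grid_def grid_to_strip_def)
  qed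
  have centre: "P k \<longleftrightarrow> {k, k+1, k+2} \<subseteq> W"
  proof -
    have "2*k+1-k = k+1" "2*k+2-k = k+2"
      by simp_all
    then show ?thesis
      unfolding P_def by auto
  qed
  have "(\<forall>i\<in>{1..2*k}. \<not> P i) \<longleftrightarrow> (\<forall>c\<in>{1..k}. \<not> P c)"
    by (rule ball_mirror_half_iff) (use mirror in simp)
  also have "\<dots> \<longleftrightarrow> (\<forall>c\<in>{1..<k}. \<not> P c) \<and> \<not> P k"
    using assms(1) by (auto simp: order_le_less)
  finally show ?thesis
    unfolding no_water_block_def using vertex block centre by auto
qed

section \<open>Colorings with land and with water centre\<close>

lemma mem_N_set_i_1: "V \<in> N_set_i k 1 \<longleftrightarrow> V \<in> N_set k \<and> ((1,k) \<in> V \<longleftrightarrow> (2,k) \<notin> V)"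
  and mem_N_set_i_2: "V \<in> N_set_i k 2 \<longleftrightarrow> V \<in> N_set k \<and> (1,k) \<in> V \<and> (2,k) \<in> V"
proof -
  have "{r \<in> {1,2}. (r, k) \<in> V} = (if (1,k) \<in> V then {1} else {}) \<union> (if (2,k) \<in> V then {2} else {})"
    by auto
  then show "V \<in> N_set_i k 1 \<longleftrightarrow> V \<in> N_set k \<and> ((1,k) \<in> V \<longleftrightarrow> (2,k) \<notin> V)"
    and "V \<in> N_set_i k 2 \<longleftrightarrow> V \<in> N_set k \<and> (1,k) \<in> V \<and> (2,k) \<in> V"
    unfolding N_set_i_def by auto
qed

lemma strip_to_grid_image_in_N_set_iff:
  assumes "k \<ge> 1" "W \<subseteq> {1..2*k+1} - {k+1}"
  shows "strip_to_grid k ` W \<in> N_set k \<longleftrightarrow> W \<in> M_circ (2*k+1)"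
proof -
  have "W - {k+1} = W" "k+1 \<notin> W" "W \<subseteq> {1..2*k+1}"
    using assms(2) by auto
  moreover have "strip_to_grid k ` W \<subseteq> grid k"
    using assms(2) strip_to_grid_in_grid by blast
  ultimately show ?thesis
    using mob_vertex_condition_iff[OF assms(1), of W] connected_in_strip_to_grid_iff[OF assms(2)]
    unfolding N_set_eq M_circ_def by auto
qed

lemma strip_to_grid_image_in_N_set_i_1_iff:
  assumes "k \<ge> 1" "W \<subseteq> {1..2*k+1} - {k+1}"
  shows "strip_to_grid k ` W \<in> N_set_i k 1 \<union> {R_land} \<longleftrightarrow> insert (k+1) W \<in> M_circ (2*k+1)"
proof -
  let ?V = "strip_to_grid k ` W"
  have "k+1 \<notin> W" "W \<subseteq> {1..2*k+1}"
    using assms(2) by auto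
  have "?V \<subseteq> grid k"
    using assms(2) strip_to_grid_in_grid by blast
  have last_column: "(1,k) \<in> ?V \<longleftrightarrow> k \<in> W" "(2,k) \<in> ?V \<longleftrightarrow> k+2 \<in> W"
    using assms by (auto simp: mem_strip_to_grid_image[OF assms(2)] grid_def grid_to_strip_def)
  have vertices: "(\<forall>i\<in>{1..2*k+1-1}. \<not> mob_vertex_squares (2*k+1) i \<subseteq> insert (k+1) W) \<longleftrightarrow>
      no_water_block k ?V \<and> \<not> (k \<in> W \<and> k+2 \<in> W)"
    using mob_vertex_condition_iff[OF assms(1), of "insert (k+1) W"] \<open>k+1 \<notin> W\<close> \<open>W \<subseteq> {1..2*k+1}\<close>
    by auto
  \<comment> \<open>the only square of \<open>W\<close> that can touch the centre, once \<open>k\<close> and \<open>k+2\<close> are not both water\<close>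
  define a where "a = (if k \<in> W then k else k+2)"
  have connected: "connected_in (mob_adj (2*k+1)) (insert (k+1) W) \<longleftrightarrow>
      W = {} \<or> (a \<in> W \<and> connected_in (mob_adj (2*k+1)) W)"
    if "\<not> (k \<in> W \<and> k+2 \<in> W)"
  proof -
    have "connected_in (mob_adj (2*k+1)) (W \<union> {k+1}) \<longleftrightarrow>
        W = {} \<or> (a \<in> W \<and> connected_in (mob_adj (2*k+1)) W)"
      by (rule connected_in_Un_pendant_iff)
        (use that assms(1) \<open>k+1 \<notin> W\<close> in \<open>auto simp: a_def mob_adj_def\<close>)
    then show ?thesis by simp
  qed
  show ?thesis
  proof (cases "k \<in> W \<and> k+2 \<in> W")
    case True
    then have "?V \<notin> N_set_i k 1 \<union> {R_land}"
      using last_column unfolding Un_iff mem_N_set_i_1 R_land_def by auto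
    moreover have "insert (k+1) W \<notin> M_circ (2*k+1)"
      using vertices True unfolding M_circ_def by blast
    ultimately show ?thesis
      by blast
  next
    case False
    have "insert (k+1) W \<in> M_circ (2*k+1) \<longleftrightarrow>
        (W = {} \<or> (a \<in> W \<and> connected_in (mob_adj (2*k+1)) W)) \<and> no_water_block k ?V"
      using vertices connected[OF False] False \<open>W \<subseteq> {1..2*k+1}\<close> unfolding M_circ_def by auto
    moreover have "?V \<in> N_set_i k 1 \<union> {R_land} \<longleftrightarrow>
        W = {} \<or> (connected_in (mob_adj (2*k+1)) W \<and> no_water_block k ?V \<and> (k \<in> W \<longleftrightarrow> k+2 \<notin> W))"
      using last_column connected_in_strip_to_grid_iff[OF assms(2)] \<open>?V \<subseteq> grid k\<close>
      unfolding Un_iff mem_N_set_i_1 N_set_eq R_land_def by auto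
    moreover have "a \<in> W \<longleftrightarrow> (k \<in> W \<longleftrightarrow> k+2 \<notin> W)"
      using False unfolding a_def by auto
    ultimately show ?thesis
      by (auto simp: no_water_block_def)
  qed
qed

lemma bij_betw_red_contr_land_centre:
  assumes "k \<ge> 1"
  shows "bij_betw (red k \<circ> contr k) {W \<in> M_circ (2*k+1). k+1 \<notin> W} (N_set k)"
proof (rule bij_betw_byWitness[where f' = "image (grid_to_strip k)"])
  have punctured: "W \<subseteq> {1..2*k+1} - {k+1}" if "W \<in> M_circ (2*k+1)" "k+1 \<notin> W" for W
    using that unfolding M_circ_def by auto
  have in_grid: "V \<subseteq> grid k" if "V \<in> N_set k" for V
    using that unfolding N_set_eq by blast
  note preimage = grid_to_strip_image_punctured[OF in_grid]
  show "\<forall>W\<in>{W \<in> M_circ (2*k+1). k+1 \<notin> W}. grid_to_strip k ` (red k \<circ> contr k) W = W"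
    using punctured red_contr_punctured(1) grid_to_strip_image_strip_to_grid by auto
  show "\<forall>V\<in>N_set k. (red k \<circ> contr k) (grid_to_strip k ` V) = V"
    using red_contr_punctured(1)[OF preimage] strip_to_grid_image_grid_to_strip[OF in_grid] by auto
  show "(red k \<circ> contr k) ` {W \<in> M_circ (2*k+1). k+1 \<notin> W} \<subseteq> N_set k"
    using punctured red_contr_punctured(1) strip_to_grid_image_in_N_set_iff[OF assms] by auto
  show "image (grid_to_strip k) ` N_set k \<subseteq> {W \<in> M_circ (2*k+1). k+1 \<notin> W}"
  proof (rule image_subsetI)
    fix V assume V: "V \<in> N_set k"
    have "grid_to_strip k ` V \<in> M_circ (2*k+1)"
      using strip_to_grid_image_in_N_set_iff[OF assms preimage[OF V]]
        strip_to_grid_image_grid_to_strip[OF in_grid[OF V]] V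
      by simp
    moreover have "k+1 \<notin> grid_to_strip k ` V"
      using preimage[OF V] by blast
    ultimately show "grid_to_strip k ` V \<in> {W \<in> M_circ (2*k+1). k+1 \<notin> W}"
      by blast
  qed
qed

lemma bij_betw_red_contr_water_centre:
  assumes "k \<ge> 1"
  shows "bij_betw (red k \<circ> contr k) {W \<in> M_circ (2*k+1). k+1 \<in> W} (N_set_i k 1 \<union> {R_land})"
proof (rule bij_betw_byWitness[where f' = "\<lambda>V. insert (k+1) (grid_to_strip k ` V)"])
  have punctured: "W - {k+1} \<subseteq> {1..2*k+1} - {k+1}" if "W \<in> M_circ (2*k+1)" for W
    using that unfolding M_circ_def by auto
  have red_contr: "(red k \<circ> contr k) W = strip_to_grid k ` (W - {k+1})"
    if "W \<in> M_circ (2*k+1)" "k+1 \<in> W" for W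
    using red_contr_punctured(2)[OF punctured[OF that(1)]] that(2) by (simp add: insert_absorb)
  have in_grid: "V \<subseteq> grid k" if "V \<in> N_set_i k 1 \<union> {R_land}" for V
    using that unfolding Un_iff mem_N_set_i_1 N_set_eq R_land_def by blast
  note preimage = grid_to_strip_image_punctured[OF in_grid]
  show "\<forall>W\<in>{W \<in> M_circ (2*k+1). k+1 \<in> W}.
      insert (k+1) (grid_to_strip k ` (red k \<circ> contr k) W) = W"
  proof (intro ballI)
    fix W assume "W \<in> {W \<in> M_circ (2*k+1). k+1 \<in> W}"
    then have W: "W \<in> M_circ (2*k+1)" "k+1 \<in> W"
      by simp_all
    have "grid_to_strip k ` (red k \<circ> contr k) W = W - {k+1}"
      unfolding red_contr[OF W] by (rule grid_to_strip_image_strip_to_grid[OF punctured[OF W(1)]])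
    then show "insert (k+1) (grid_to_strip k ` (red k \<circ> contr k) W) = W"
      using W(2) by auto
  qed
  show "\<forall>V\<in>N_set_i k 1 \<union> {R_land}. (red k \<circ> contr k) (insert (k+1) (grid_to_strip k ` V)) = V"
    using red_contr_punctured(2)[OF preimage] strip_to_grid_image_grid_to_strip[OF in_grid] by simp
  show "(red k \<circ> contr k) ` {W \<in> M_circ (2*k+1). k+1 \<in> W} \<subseteq> N_set_i k 1 \<union> {R_land}"
  proof (rule image_subsetI)
    fix W assume "W \<in> {W \<in> M_circ (2*k+1). k+1 \<in> W}"
    then have W: "W \<in> M_circ (2*k+1)" "k+1 \<in> W"
      by simp_all
    then have "insert (k+1) (W - {k+1}) \<in> M_circ (2*k+1)"
      by (simp add: insert_absorb)
    then show "(red k \<circ> contr k) W \<in> N_set_i k 1 \<union> {R_land}"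
      unfolding red_contr[OF W] strip_to_grid_image_in_N_set_i_1_iff[OF assms punctured[OF W(1)]] .
  qed
  show "(\<lambda>V. insert (k+1) (grid_to_strip k ` V)) ` (N_set_i k 1 \<union> {R_land})
      \<subseteq> {W \<in> M_circ (2*k+1). k+1 \<in> W}"
  proof (rule image_subsetI)
    fix V assume V: "V \<in> N_set_i k 1 \<union> {R_land}"
    have "insert (k+1) (grid_to_strip k ` V) \<in> M_circ (2*k+1)"
      using strip_to_grid_image_in_N_set_i_1_iff[OF assms preimage[OF V]]
        strip_to_grid_image_grid_to_strip[OF in_grid[OF V]] V
      by simp
    then show "insert (k+1) (grid_to_strip k ` V) \<in> {W \<in> M_circ (2*k+1). k+1 \<in> W}"
      by simp
  qed
qed

section \<open>Removing a full water column\<close>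

lemma connected_in_grid_adj_Suc:
  assumes "U \<subseteq> grid k"
  shows "connected_in (grid_adj (k+1)) U \<longleftrightarrow> connected_in (grid_adj k) U"
  by (rule connected_in_cong) (use assms in \<open>auto simp: grid_adj_def grid_def\<close>)

lemma no_water_block_Suc:
  assumes "U \<subseteq> grid k"
  shows "no_water_block (k+1) (U \<union> {(1,k+1),(2,k+1)}) \<longleftrightarrow>
    no_water_block k U \<and> \<not> {(1,k),(2,k)} \<subseteq> U"
proof -
  have "{(1,c),(2,c),(1,c+1),(2,c+1)} \<subseteq> U \<union> {(1,k+1),(2,k+1)} \<longleftrightarrow> {(1,c),(2,c),(1,c+1),(2,c+1)} \<subseteq> U"
    if "c < k" for c
    using that by auto
  moreover have "(1,k) \<in> U \<Longrightarrow> k \<ge> 1"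
    using assms by (auto simp: grid_def)
  ultimately show ?thesis
    unfolding no_water_block_def by (auto simp: less_Suc_eq)
qed

lemma Un_last_column_in_N_set_i_2_iff:
  assumes "U \<subseteq> grid k"
  shows "U \<union> {(1,k+1),(2,k+1)} \<in> N_set_i (k+1) 2 \<longleftrightarrow> U \<in> N_set_i k 1 \<union> {R_land}"
proof -
  let ?C = "{(1::nat,k+1),(2::nat,k+1)}"
  have "U \<inter> ?C = {}"
    using assms by (auto simp: grid_def)
  have "connected_in (grid_adj (k+1)) ({(1,k+1)} \<union> {(2,k+1)})"
    by (rule connected_in_Un) (auto simp: grid_adj_def grid_def)
  then have "connected_in (grid_adj (k+1)) ?C"
    by (simp add: insert_commute)
  define a where "a = (if (1,k) \<in> U then (1::nat,k) else (2,k))"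
  have connected: "connected_in (grid_adj (k+1)) (U \<union> ?C) \<longleftrightarrow>
      U = {} \<or> (a \<in> U \<and> connected_in (grid_adj k) U)"
    if "\<not> {(1,k),(2,k)} \<subseteq> U"
  proof -
    have "connected_in (grid_adj (k+1)) (U \<union> ?C) \<longleftrightarrow>
        U = {} \<or> (a \<in> U \<and> connected_in (grid_adj (k+1)) U)"
      by (rule connected_in_Un_pendant_iff)
        (use that assms \<open>U \<inter> ?C = {}\<close> \<open>connected_in (grid_adj (k+1)) ?C\<close>
          in \<open>auto simp: a_def grid_adj_def grid_def\<close>)
    then show ?thesis
      using connected_in_grid_adj_Suc[OF assms] by simp
  qed
  have "U \<union> ?C \<subseteq> grid (k+1)"
    using assms by (auto simp: grid_def)
  then have N_set_i_2: "U \<union> ?C \<in> N_set_i (k+1) 2 \<longleftrightarrow>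
      connected_in (grid_adj (k+1)) (U \<union> ?C) \<and> no_water_block k U \<and> \<not> {(1,k),(2,k)} \<subseteq> U"
    using no_water_block_Suc[OF assms] unfolding mem_N_set_i_2 N_set_eq by auto
  show ?thesis
  proof (cases "{(1,k),(2,k)} \<subseteq> U")
    case True
    then show ?thesis
      unfolding N_set_i_2 Un_iff mem_N_set_i_1 R_land_def by auto
  next
    case False
    have "a \<in> U \<longleftrightarrow> ((1,k) \<in> U \<longleftrightarrow> (2,k) \<notin> U)"
      using False unfolding a_def by auto
    then show ?thesis
      using False connected[OF False] assms
      unfolding N_set_i_2 Un_iff mem_N_set_i_1 N_set_eq R_land_def
      by (auto simp: no_water_block_def)
  qed
qed

lemma bij_betw_remove_last_column:
  "bij_betw (\<lambda>V. V - {(1,k+1),(2,k+1)}) (N_set_i (k+1) 2) (N_set_i k 1 \<union> {R_land})"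
proof (rule bij_betw_byWitness[where f' = "\<lambda>U. U \<union> {(1,k+1),(2,k+1)}"])
  let ?C = "{(1::nat,k+1),(2::nat,k+1)}"
  have rest_in_grid: "V - ?C \<subseteq> grid k" and last_column: "V - ?C \<union> ?C = V"
    if "V \<in> N_set_i (k+1) 2" for V
    using that unfolding mem_N_set_i_2 N_set_eq by (auto simp: grid_def)
  have in_grid: "U \<subseteq> grid k" if "U \<in> N_set_i k 1 \<union> {R_land}" for U
    using that unfolding Un_iff mem_N_set_i_1 N_set_eq R_land_def by blast
  have remove_last: "U \<union> ?C - ?C = U" if "U \<subseteq> grid k" for U
    using that by (auto simp: grid_def)
  show "\<forall>U\<in>N_set_i k 1 \<union> {R_land}. U \<union> ?C - ?C = U"
    using remove_last[OF in_grid] by blast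
  show "\<forall>V\<in>N_set_i (k+1) 2. V - ?C \<union> ?C = V"
    using last_column by blast
  show "(\<lambda>V. V - ?C) ` N_set_i (k+1) 2 \<subseteq> N_set_i k 1 \<union> {R_land}"
  proof (rule image_subsetI)
    fix V assume V: "V \<in> N_set_i (k+1) 2"
    then show "V - ?C \<in> N_set_i k 1 \<union> {R_land}"
      using Un_last_column_in_N_set_i_2_iff[OF rest_in_grid[OF V]] last_column[OF V] by simp
  qed
  show "(\<lambda>U. U \<union> ?C) ` (N_set_i k 1 \<union> {R_land}) \<subseteq> N_set_i (k+1) 2"
  proof (rule image_subsetI)
    fix U assume U: "U \<in> N_set_i k 1 \<union> {R_land}"
    then show "U \<union> ?C \<in> N_set_i (k+1) 2"
      using Un_last_column_in_N_set_i_2_iff[OF in_grid[OF U]] by simp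
  qed
qed

lemma finite_M_circ: "finite (M_circ n)"
  by (rule finite_subset[of _ "Pow {1..n}"]) (auto simp: M_circ_def)

lemma finite_N_set_i: "finite (N_set_i k i)"
  by (rule finite_subset[of _ "Pow (grid k)"]) (auto simp: N_set_i_def N_set_def grid_def)

theorem lemma5p2:
  fixes k :: nat
  assumes "k \<ge> 1"
  shows "bij_betw (red k \<circ> contr k) {W \<in> M_circ (2 * k + 1). k + 1 \<notin> W} (N_set k)
       \<and> bij_betw (red k \<circ> contr k) {W \<in> M_circ (2 * k + 1). k + 1 \<in> W}
           (N_set_i k 1 \<union> {R_land})
       \<and> card (M_circ (2 * k + 1)) = card (N_set k) + card (N_set_i k 1) + 1
       \<and> card (M_circ (2 * k + 1)) = card (N_set k) + card (N_set_i (k + 1) 2)"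
proof -
  let ?land = "{W \<in> M_circ (2 * k + 1). k + 1 \<notin> W}"
  let ?water = "{W \<in> M_circ (2 * k + 1). k + 1 \<in> W}"
  note land = bij_betw_red_contr_land_centre[OF assms]
  note water = bij_betw_red_contr_water_centre[OF assms]
  have "R_land \<notin> N_set_i k 1"
    unfolding mem_N_set_i_1 R_land_def by simp
  then have card_water: "card (N_set_i k 1 \<union> {R_land}) = card (N_set_i k 1) + 1"
    using finite_N_set_i by simp
  have "M_circ (2 * k + 1) = ?land \<union> ?water"
    by blast
  moreover have "card (?land \<union> ?water) = card ?land + card ?water"
    by (rule card_Un_disjoint) (use finite_M_circ in auto)
  ultimately have "card (M_circ (2 * k + 1)) = card ?land + card ?water"
    by simp
  also have "\<dots> = card (N_set k) + card (N_set_i k 1) + 1"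
    using bij_betw_same_card[OF land] bij_betw_same_card[OF water] card_water by simp
  finally show ?thesis
    using land water bij_betw_same_card[OF bij_betw_remove_last_column[of k]] card_water by simp
qed

end
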